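(* Let $(\mathcal{G},\mu\circ\lambda)$ be a measured groupoid and let $\pi$ be a probability measure equivalent to $\mu\circ\lambda$ (with $t_*\pi=s_*\pi=\mu$). Let $(\check{\mathcal{B}},\check\theta_\mu)$ be the Poisson boundary of the Markov operator generated by the reflected measure $\check\pi$ with initial distribution $\mu$. Then $\check\theta_\mu$ is $\pi$-stationary: $\pi*\check\theta_\mu=\check\theta_\mu$, where $\pi*\check\theta_\mu:=\int_X\int_{\mathcal{G}}(g^{-1})_*\check\theta^x\,d\pi^x(g)\,d\mu(x)$.
   Context: $\mathcal{G}$ is a Borel groupoid with standard Borel unit space $X$, source $s$, target $t$, Borel Haar system $\lambda$ and quasi-invariant probability $\mu$ on $X$. $\check\pi$ is the image of $\pi$ under inversion; $\pi^x$ is the disintegration of $\pi$ over $t$ (supported on $t^{-1}(x)$). Disintegrate $\check\pi$ over $t$ as $\check\pi^x$ and set $\check\pi^g=g_*\check\pi^{s(g)}$. On $\Omega_{\mathcal{G}}=\{(g_0,g_1,\dots):t(g_i)=t(g_j)\}$, $\check{\mathbb{P}}_g$ is the Markov measure starting at $\delta_g$ with transitions $\check\pi^{g_{n-1}}$ and $\check{\mathbb{P}}_m=\int\check{\mathbb{P}}_g dm(g)$. The Poisson boundary $\check{\mathcal{B}}$ is the space of ergodic components of stable equivalence of the shift $T(g_0,g_1,\dots)=(g_1,\dots)$, with map $\check{\mathbf{bnd}}$, $\check\theta_\mu=\check{\mathbf{bnd}}_*\check{\mathbb{P}}_\mu$, target induced by $t(g_0)$, $\mathcal{G}$-action induced by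 diagonal left multiplication; $\check\theta^x=\check{\mathbf{bnd}}_*\check{\mathbb{P}}_x$ is the disintegration of $\check\theta_\mu$ over $X$. For $g\in t^{-1}(x)$, $g^{-1}$ maps the fiber $\check{\mathcal{B}}^x$ to $\check{\mathcal{B}}^{s(g)}$. *)

theory Defs
  imports "HOL-Probability.Probability"
begin

definition standard_borel :: "'a measure \<Rightarrow> bool" where
  "standard_borel M \<longleftrightarrow>
     (\<exists>(f::'a \<Rightarrow> real) g B. B \<in> sets borel \<and>
        f \<in> measurable M (restrict_space borel B) \<and>
        g \<in> measurable (restrict_space borel B) M \<and>
        (\<forall>x\<in>space M. g (f x) = x) \<and> (\<forall>y\<in>B. f (g y) = y))"

definition borel_groupoid ::
  "'g measure \<Rightarrow> 'x measure \<Rightarrow> ('g \<Rightarrow> 'x) \<Rightarrow> ('g \<Rightarrow> 'x) \<Rightarrow> ('x \<Rightarrow> 'g)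
    \<Rightarrow> ('g \<Rightarrow> 'g \<Rightarrow> 'g) \<Rightarrow> ('g \<Rightarrow> 'g) \<Rightarrow> bool" where
  "borel_groupoid G X s t u m i \<longleftrightarrow>
     s \<in> measurable G X \<and> t \<in> measurable G X \<and> u \<in> measurable X G \<and>
     i \<in> measurable G G \<and>
     (\<lambda>(g, h). m g h) \<in> measurable (restrict_space (G \<Otimes>\<^sub>M G) {(g, h). s g = t h}) G \<and>
     (\<forall>x\<in>space X. s (u x) = x \<and> t (u x) = x) \<and>
     (\<forall>g\<in>space G. \<forall>h\<in>space G. s g = t h \<longrightarrow> s (m g h) = s h \<and> t (m g h) = t g) \<and>
     (\<forall>g\<in>space G. \<forall>h\<in>space G. \<forall>k\<in>space G. s g = t h \<and> s h = t k \<longrightarrow>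
        m (m g h) k = m g (m h k)) \<and>
     (\<forall>g\<in>space G. m (u (t g)) g = g \<and> m g (u (s g)) = g) \<and>
     (\<forall>g\<in>space G. s (i g) = t g \<and> t (i g) = s g \<and> m g (i g) = u (t g) \<and> m (i g) g = u (s g))"

text \<open>The measure  \<open>\<integral> K x d\<mu>(x)\<close> on G (e.g. \<open>\<mu>\<circ>\<lambda>\<close>).\<close>
definition integrate_family :: "'g measure \<Rightarrow> 'x measure \<Rightarrow> ('x \<Rightarrow> 'g measure) \<Rightarrow> 'g measure" where
  "integrate_family G mu K = measure_of (space G) (sets G) (\<lambda>E. \<integral>\<^sup>+ x. emeasure (K x) E \<partial>mu)"

definition haar_system ::
  "'g measure \<Rightarrow> 'x measure \<Rightarrow> ('g \<Rightarrow> 'x) \<Rightarrow> ('g \<Rightarrow> 'x) \<Rightarrow> ('g \<Rightarrow> 'g \<Rightarrow> 'g)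
    \<Rightarrow> ('x \<Rightarrow> 'g measure) \<Rightarrow> bool" where
  "haar_system G X s t m lam \<longleftrightarrow>
     (\<forall>x\<in>space X. sets (lam x) = sets G \<and> sigma_finite_measure (lam x) \<and>
        emeasure (lam x) {g\<in>space G. t g \<noteq> x} = 0) \<and>
     (\<forall>E\<in>sets G. (\<lambda>x. emeasure (lam x) E) \<in> borel_measurable X) \<and>
     (\<forall>g\<in>space G. \<forall>E\<in>sets G.
        emeasure (lam (t g)) E = emeasure (lam (s g)) {h\<in>space G. t h = s g \<and> m g h \<in> E})"

definition equiv_measures :: "'a measure \<Rightarrow> 'a measure \<Rightarrow> bool" where
  "equiv_measures M N \<longleftrightarrow> sets M = sets N \<and>
     (\<forall>A\<in>sets M. emeasure M A = 0 \<longleftrightarrow> emeasure N A = 0)"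

text \<open>Measured groupoid \<open>(\<G>, \<mu>\<circ>\<lambda>)\<close>: Borel groupoid with standard Borel unit space,
  Borel Haar system and quasi-invariant probability measure on the unit space.\<close>
definition measured_groupoid ::
  "'g measure \<Rightarrow> 'x measure \<Rightarrow> ('g \<Rightarrow> 'x) \<Rightarrow> ('g \<Rightarrow> 'x) \<Rightarrow> ('x \<Rightarrow> 'g)
    \<Rightarrow> ('g \<Rightarrow> 'g \<Rightarrow> 'g) \<Rightarrow> ('g \<Rightarrow> 'g) \<Rightarrow> ('x \<Rightarrow> 'g measure) \<Rightarrow> 'x measure \<Rightarrow> bool" where
  "measured_groupoid G X s t u m i lam mu \<longleftrightarrow>
     borel_groupoid G X s t u m i \<and> standard_borel X \<and> haar_system G X s t m lam \<and>
     prob_space mu \<and> sets mu = sets X \<and>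
     equiv_measures (integrate_family G mu lam) (distr (integrate_family G mu lam) G i)"

definition disintegration ::
  "'a measure \<Rightarrow> 'x measure \<Rightarrow> 'x measure \<Rightarrow> ('a \<Rightarrow> 'x) \<Rightarrow> ('x \<Rightarrow> 'a measure) \<Rightarrow> bool" where
  "disintegration M N X f K \<longleftrightarrow>
     (\<forall>x\<in>space X. prob_space (K x) \<and> sets (K x) = sets M) \<and>
     (AE x in N. emeasure (K x) {w\<in>space M. f w \<noteq> x} = 0) \<and>
     (\<forall>E\<in>sets M. (\<lambda>x. emeasure (K x) E) \<in> borel_measurable X) \<and>
     (\<forall>E\<in>sets M. emeasure M E = (\<integral>\<^sup>+ x. emeasure (K x) E \<partial>N))"

text \<open>Transition \<open>\<check>\<pi>^g = g_* \<check>\<pi>^{s(g)}\<close>.\<close>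
definition reflected_transition ::
  "'g measure \<Rightarrow> ('g \<Rightarrow> 'x) \<Rightarrow> ('g \<Rightarrow> 'x) \<Rightarrow> ('g \<Rightarrow> 'g \<Rightarrow> 'g) \<Rightarrow> ('x \<Rightarrow> 'g measure)
    \<Rightarrow> 'g \<Rightarrow> 'g measure" where
  "reflected_transition G s t m K g = measure_of (space G) (sets G)
     (\<lambda>E. emeasure (K (s g)) {h\<in>space G. t h = s g \<and> m g h \<in> E})"

text \<open>Probability that steps 1..n of the chain from g lie in the given sets.\<close>
fun cyl_prob :: "('a \<Rightarrow> 'a measure) \<Rightarrow> 'a set list \<Rightarrow> 'a \<Rightarrow> ennreal" where
  "cyl_prob K [] g = 1"
| "cyl_prob K (A # As) g = (\<integral>\<^sup>+ h. indicator A h * cyl_prob K As h \<partial>(K g))"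

definition markov_measure ::
  "'a measure \<Rightarrow> ('a \<Rightarrow> 'a measure) \<Rightarrow> 'a \<Rightarrow> 'a stream measure \<Rightarrow> bool" where
  "markov_measure G K g P \<longleftrightarrow> prob_space P \<and> sets P = sets (stream_space G) \<and>
     (\<forall>A As. A \<in> sets G \<longrightarrow> set As \<subseteq> sets G \<longrightarrow>
        emeasure P {w\<in>space (stream_space G). shd w \<in> A \<and> (\<forall>k<length As. stl w !! k \<in> As ! k)}
          = indicator A g * cyl_prob K As g)"

definition path_space :: "'g measure \<Rightarrow> ('g \<Rightarrow> 'x) \<Rightarrow> 'g stream set" where
  "path_space G t = {w\<in>space (stream_space G). \<forall>k l. t (w !! k) = t (w !! l)}"

definition stably_equiv :: "'a stream \<Rightarrow> 'a stream \<Rightarrow> bool" where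
  "stably_equiv w w' \<longleftrightarrow> (\<exists>n k. sdrop n w = sdrop k w')"

text \<open>Measurable sets of paths saturated for stable equivalence: the sigma-algebra that
  \<open>\<check>bnd\<close> pulls back from the Poisson boundary.\<close>
definition stable_invariant :: "'g measure \<Rightarrow> ('g \<Rightarrow> 'x) \<Rightarrow> 'g stream set \<Rightarrow> bool" where
  "stable_invariant G t A \<longleftrightarrow> A \<in> sets (stream_space G) \<and> A \<subseteq> path_space G t \<and>
     (\<forall>w\<in>path_space G t. \<forall>w'\<in>path_space G t. stably_equiv w w' \<longrightarrow> (w \<in> A \<longleftrightarrow> w' \<in> A))"

end

theory Submission
  imports Defs
begin

text \<open>
  Let \<open>\<Phi> h = emeasure (P h) A\<close>. Almost every path of the reflected walk stays in one \<open>t\<close>-fibre, and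
  \<open>A\<close> is saturated for stable equivalence, so \<open>A\<close> is almost surely shift invariant and the
  Markov property makes \<open>\<Phi>\<close> harmonic. At a unit \<open>u x\<close> the reflected transition is the
  fibre measure \<open>piCK x\<close> itself, so disintegrating \<open>i\<^sub>*\<pi>\<close> over \<open>t\<close> gives
  \<open>\<integral> \<Phi> (u x) d\<mu> = \<integral> \<Phi> d(i\<^sub>*\<pi>) = \<integral> \<Phi> (g\<^sup>-\<^sup>1) d\<pi>\<close>. Finally the walk is equivariant: the walk
  from \<open>g\<close> is the left translate by \<open>g\<close> of the walk from the unit \<open>u (s g)\<close>, and
  disintegrating \<open>\<pi>\<close> over \<open>t\<close> turns \<open>\<Phi> (g\<^sup>-\<^sup>1)\<close> into the integrand on the right.
\<close>

section \<open>Standard Borel spaces and disintegrations\<close>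

lemma standard_borel_singleton_sets:
  assumes "standard_borel X" "x \<in> space X"
  shows "{x} \<in> sets X"
proof -
  obtain f :: "_ \<Rightarrow> real" and g B where f: "f \<in> measurable X (restrict_space borel B)"
    and gf: "\<forall>x\<in>space X. g (f x) = x"
    using assms(1) unfolding standard_borel_def by blast
  have "f x \<in> B" using measurable_space[OF f assms(2)] by (simp add: space_restrict_space)
  then have "{f x} \<in> sets (restrict_space borel B)"
    by (auto simp: sets_restrict_space image_iff intro!: bexI[of _ "{f x}"])
  then have "f -` {f x} \<inter> space X \<in> sets X" by (rule measurable_sets[OF f])
  moreover have "f -` {f x} \<inter> space X = {x}"
    using gf assms(2) by (auto, metis)
  ultimately show ?thesis by simp
qed

lemma standard_borel_eq_sets:
  assumes "standard_borel X" and a: "a \<in> measurable M X" and b: "b \<in> measurable M X"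
  shows "{p\<in>space M. a p = b p} \<in> sets M"
proof -
  obtain f :: "_ \<Rightarrow> real" and g B where f: "f \<in> measurable X (restrict_space borel B)"
    and gf: "\<forall>x\<in>space X. g (f x) = x"
    using assms(1) unfolding standard_borel_def by blast
  have f': "f \<in> borel_measurable X" using f by (simp add: measurable_restrict_space2_iff)
  have "(\<lambda>p. f (a p)) \<in> borel_measurable M" "(\<lambda>p. f (b p)) \<in> borel_measurable M"
    using measurable_compose[OF a f'] measurable_compose[OF b f'] by auto
  then have "{p\<in>space M. f (a p) = f (b p)} \<in> sets M" by measurable
  moreover have "{p\<in>space M. f (a p) = f (b p)} = {p\<in>space M. a p = b p}"
    using gf measurable_space[OF a] measurable_space[OF b] by (auto, metis)
  ultimately show ?thesis by simp
qed

lemma disintegration_measurable: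
  assumes "disintegration M N X f K"
  shows "K \<in> measurable X (subprob_algebra M)"
  using assms unfolding disintegration_def
  by (auto intro!: measurable_subprob_algebra prob_space_imp_subprob_space)

lemma nn_integral_disintegration:
  assumes D: "disintegration M N X f K" and NX: "sets N = sets X" and N: "prob_space N"
    and h: "h \<in> borel_measurable M"
  shows "(\<integral>\<^sup>+w. h w \<partial>M) = (\<integral>\<^sup>+x. (\<integral>\<^sup>+w. h w \<partial>K x) \<partial>N)"
proof -
  have K: "K \<in> measurable N (subprob_algebra M)"
    using disintegration_measurable[OF D] by (simp add: measurable_cong_sets[OF NX refl])
  have "M = N \<bind> K"
  proof (rule measure_eqI)
    show "sets M = sets (N \<bind> K)"
      using sets_bind[OF _ prob_space.not_empty[OF N], of K M] K by (simp add: subprob_measurableD(2))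
    fix E assume "E \<in> sets M"
    then show "emeasure M E = emeasure (N \<bind> K) E"
      using D emeasure_bind[OF prob_space.not_empty[OF N] K] unfolding disintegration_def by simp
  qed
  then show ?thesis using nn_integral_bind[OF h K] by simp
qed

lemma AE_disintegration_fibre:
  assumes D: "disintegration M N X f K" and "standard_borel X" and f: "f \<in> measurable M X"
    and NX: "sets N = sets X"
  shows "AE x in N. AE w in K x. f w = x"
proof -
  have "AE x in N. emeasure (K x) {w\<in>space M. f w \<noteq> x} = 0"
    using D unfolding disintegration_def by blast
  then show ?thesis
  proof (rule AE_mp[OF _ AE_I2])
    fix x assume x: "x \<in> space N"
    then have sets_K: "sets (K x) = sets M"
      using D sets_eq_imp_space_eq[OF NX] unfolding disintegration_def by auto
    have "f -` {x} \<inter> space M \<in> sets M"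
      using measurable_sets[OF f standard_borel_singleton_sets[OF assms(2)]] x
        sets_eq_imp_space_eq[OF NX] by simp
    moreover have "{w\<in>space M. f w \<noteq> x} = space M - (f -` {x} \<inter> space M)" by auto
    ultimately have "{w\<in>space M. f w \<noteq> x} \<in> sets (K x)"
      using sets_K by auto
    then show "emeasure (K x) {w\<in>space M. f w \<noteq> x} = 0 \<longrightarrow> (AE w in K x. f w = x)"
      using sets_eq_imp_space_eq[OF sets_K] by (auto simp: AE_iff_measurable)
  qed
qed


section \<open>Cylinder sets of stream spaces\<close>

lemma scylinder_iff_snth:
  "w \<in> streams \<Omega> \<Longrightarrow> w \<in> scylinder \<Omega> As \<longleftrightarrow> (\<forall>k<length As. w !! k \<in> As ! k)"
proof (induction As arbitrary: w)
  case (Cons A As)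
  then show ?case using Cons.IH[OF streams_stl[OF Cons.prems]]
    by (auto simp: less_Suc_eq_0_disj)
qed simp

lemma scylinder_replicate_snoc:
  assumes "A \<subseteq> \<Omega>"
  shows "scylinder \<Omega> (replicate n \<Omega> @ [A]) = {w\<in>streams \<Omega>. w !! n \<in> A}"
proof (intro set_eqI)
  fix w show "w \<in> scylinder \<Omega> (replicate n \<Omega> @ [A]) \<longleftrightarrow> w \<in> {w\<in>streams \<Omega>. w !! n \<in> A}"
  proof (cases "w \<in> streams \<Omega>")
    case True
    then show ?thesis by (auto simp: scylinder_iff_snth nth_append less_Suc_eq snth_in)
  qed (use scylinder_streams in blast)
qed

lemma scylinder_Cons_eq:
  "scylinder (space M) (A # As) =
     {w\<in>space (stream_space M). shd w \<in> A \<and> (\<forall>k<length As. stl w !! k \<in> As ! k)}"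
  by (auto simp: space_stream_space scylinder_iff_snth streams_stl)

lemma scylinder_Pow: "scylinder (space M) ` lists (sets M) \<subseteq> Pow (streams (space M))"
  using scylinder_streams by auto

lemma sets_stream_space_scylinder:
  "sets (stream_space M) = sigma_sets (streams (space M)) (scylinder (space M) ` lists (sets M))"
proof (rule antisym)
  let ?N = "sigma (streams (space M)) (scylinder (space M) ` lists (sets M))"
  have space_N: "space ?N = streams (space M)" using scylinder_Pow[of M] by (simp add: space_measure_of)
  have "sets (stream_space M) \<subseteq> sets ?N"
  proof (rule sets_stream_space_in_sets[OF space_N])
    fix n :: nat
    show "(\<lambda>w. w !! n) \<in> measurable ?N M"
    proof (rule measurableI)
      fix A assume A: "A \<in> sets M"
      have "(\<lambda>w. w !! n) -` A \<inter> space ?N = scylinder (space M) (replicate n (space M) @ [A])"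
        using sets.sets_into_space[OF A] by (auto simp: space_N scylinder_replicate_snoc)
      also have "\<dots> \<in> sets ?N"
        using A by (subst sets_measure_of[OF scylinder_Pow]) (auto intro!: sigma_sets.Basic)
      finally show "(\<lambda>w. w !! n) -` A \<inter> space ?N \<in> sets ?N" .
    qed (simp add: space_N snth_in)
  qed
  then show "sets (stream_space M) \<subseteq> sigma_sets (streams (space M)) (scylinder (space M) ` lists (sets M))"
    using scylinder_Pow[of M] by simp
  show "sigma_sets (streams (space M)) (scylinder (space M) ` lists (sets M)) \<subseteq> sets (stream_space M)"
    using sigma_sets_le_sets_iff[of "stream_space M" "scylinder (space M) ` lists (sets M)"]
    by (auto simp: space_stream_space intro!: sets_scylinder)
qed

lemma Int_stable_scylinder: "Int_stable (scylinder (space M) ` lists (sets M))"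
proof (rule Int_stableI_image)
  fix xs ys assume "xs \<in> lists (sets M)" "ys \<in> lists (sets M)"
  then show "\<exists>zs\<in>lists (sets M). scylinder (space M) xs \<inter> scylinder (space M) ys = scylinder (space M) zs"
  proof (induction xs arbitrary: ys)
    case Nil then show ?case
      by (auto simp: Int_absorb1 scylinder_streams)
  next
    case (Cons x xs)
    show ?case
    proof (cases ys)
      case Nil with Cons.hyps show ?thesis
        by (auto simp: Int_absorb2 scylinder_streams intro!: bexI[of _ "x # xs"])
    next
      case (Cons y ys')
      with Cons.IH[of ys'] Cons.prems obtain zs where "zs \<in> lists (sets M)"
        and "scylinder (space M) xs \<inter> scylinder (space M) ys' = scylinder (space M) zs"
        by auto
      with Cons Cons.hyps Cons.prems show ?thesis
        by (intro bexI[of _ "(x \<inter> y) # zs"]) auto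
    qed
  qed
qed

lemma stream_measure_eqI_scylinder:
  assumes "prob_space N" "sets N = sets (stream_space M)"
    and "prob_space N'" "sets N' = sets (stream_space M)"
    and eq: "\<And>A As. A \<in> sets M \<Longrightarrow> set As \<subseteq> sets M \<Longrightarrow>
       emeasure N (scylinder (space M) (A # As)) = emeasure N' (scylinder (space M) (A # As))"
  shows "N = N'"
proof (rule stream_space_eq_scylinder[where S = M and G = "sets M" and C = "{space M}"])
  fix xs assume "xs \<noteq> []" "xs \<in> lists (sets M)"
  then show "emeasure N (scylinder (space M) xs) = emeasure N' (scylinder (space M) xs)"
    using eq by (cases xs) auto
qed (use assms in \<open>auto simp: Int_stable_def dest: sets.sets_into_space\<close>)

section \<open>Markov measures\<close>

lemma markov_measure_scylinder:
  assumes "markov_measure M K g P" "A \<in> sets M" "set As \<subseteq> sets M"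
  shows "emeasure P (scylinder (space M) (A # As)) = indicator A g * cyl_prob K As g"
  using assms unfolding markov_measure_def scylinder_Cons_eq by blast

lemma markov_measure_prob_space_kernel:
  assumes P: "markov_measure M K g P" and g: "g \<in> space M" and K: "sets (K g) = sets M"
  shows "prob_space (K g)"
proof (rule prob_spaceI)
  have "scylinder (space M) [space M, space M] = space (stream_space M)"
    by (auto simp: space_stream_space streams_shd streams_stl)
  then have "emeasure P (space (stream_space M)) = indicator (space M) g * cyl_prob K [space M] g"
    using markov_measure_scylinder[OF P, of "space M" "[space M]"] by simp
  moreover have "space P = space (stream_space M)"
    using P unfolding markov_measure_def by (metis sets_eq_imp_space_eq)
  moreover have "space (K g) = space M" using K by (rule sets_eq_imp_space_eq)
  ultimately show "emeasure (K g) (space (K g)) = 1"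
    using P g K prob_space.emeasure_space_1[of P] unfolding markov_measure_def
    by (simp add: nn_integral_indicator)
qed

locale markov_chain =
  fixes M :: "'a measure" and K :: "'a \<Rightarrow> 'a measure" and P :: "'a \<Rightarrow> 'a stream measure"
  assumes sets_K: "\<And>g. g \<in> space M \<Longrightarrow> sets (K g) = sets M"
    and measurable_emeasure_K: "\<And>E. E \<in> sets M \<Longrightarrow> (\<lambda>g. emeasure (K g) E) \<in> borel_measurable M"
    and markov: "\<And>g. g \<in> space M \<Longrightarrow> markov_measure M K g (P g)"
begin

lemma space_K: "g \<in> space M \<Longrightarrow> space (K g) = space M"
  using sets_K by (rule sets_eq_imp_space_eq)

lemma prob_space_K: "g \<in> space M \<Longrightarrow> prob_space (K g)"
  using markov_measure_prob_space_kernel[OF markov _ sets_K] .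

lemma K_in_space_prob_algebra: "g \<in> space M \<Longrightarrow> K g \<in> space (prob_algebra M)"
  by (simp add: space_prob_algebra sets_K prob_space_K)

lemma measurable_K: "K \<in> measurable M (subprob_algebra M)"
  by (auto intro!: measurable_subprob_algebra prob_space_imp_subprob_space
      simp: prob_space_K sets_K measurable_emeasure_K)

lemma prob_space_P: "g \<in> space M \<Longrightarrow> prob_space (P g)"
  using markov unfolding markov_measure_def by blast

lemma sets_P: "g \<in> space M \<Longrightarrow> sets (P g) = sets (stream_space M)"
  using markov unfolding markov_measure_def by blast

lemma space_P: "g \<in> space M \<Longrightarrow> space (P g) = space (stream_space M)"
  using sets_P by (rule sets_eq_imp_space_eq)

lemma emeasure_P_scylinder:
  "g \<in> space M \<Longrightarrow> A \<in> sets M \<Longrightarrow> set As \<subseteq> sets M \<Longrightarrow>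
    emeasure (P g) (scylinder (space M) (A # As)) = indicator A g * cyl_prob K As g"
  using markov_measure_scylinder[OF markov] .

lemma measurable_cyl_prob: "set As \<subseteq> sets M \<Longrightarrow> cyl_prob K As \<in> borel_measurable M"
proof (induction As)
  case Nil
  have "cyl_prob K [] = (\<lambda>_. 1)" by auto
  then show ?case by simp
next
  case (Cons A As)
  then have [measurable]: "A \<in> sets M" "cyl_prob K As \<in> borel_measurable M" by auto
  have "(\<lambda>h. indicator A h * cyl_prob K As h) \<in> borel_measurable M" by measurable
  from measurable_compose[OF measurable_K nn_integral_measurable_subprob_algebra[OF this]]
  show ?case by (simp add: fun_eq_iff)
qed

lemma measurable_P: "P \<in> measurable M (prob_algebra (stream_space M))"
proof (rule measurable_prob_algebra_generated[OF sets_stream_space_scylinder Int_stable_scylinder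
      scylinder_Pow prob_space_P sets_P])
  fix C assume "C \<in> scylinder (space M) ` lists (sets M)"
  then obtain xs where xs: "xs \<in> lists (sets M)" and C: "C = scylinder (space M) xs" by auto
  show "(\<lambda>g. emeasure (P g) C) \<in> borel_measurable M"
  proof (cases xs)
    case Nil
    then show ?thesis
      using prob_space.emeasure_space_1[OF prob_space_P]
      by (intro measurable_cong[THEN iffD1, OF _ measurable_const[of 1]])
         (auto simp: C space_P space_stream_space)
  next
    case (Cons A As)
    with xs have A: "A \<in> sets M" and As: "set As \<subseteq> sets M" by auto
    note [measurable] = A measurable_cyl_prob[OF As]
    have "(\<lambda>g. indicator A g * cyl_prob K As g) \<in> borel_measurable M" by measurable
    then show ?thesis
      by (rule measurable_cong[THEN iffD1, rotated])
        (simp add: C Cons emeasure_P_scylinder[OF _ A As] del: scylinder.simps)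
  qed
qed

lemma measurable_emeasure_P:
  "A \<in> sets (stream_space M) \<Longrightarrow> (\<lambda>g. emeasure (P g) A) \<in> borel_measurable M"
  using measurable_compose[OF measurable_prob_algebraD[OF measurable_P]
      measurable_emeasure_subprob_algebra] .

lemma distr_stl_P:
  assumes g: "g \<in> space M"
  shows "distr (P g) (stream_space M) stl = K g \<bind> P"
proof (rule stream_measure_eqI_scylinder)
  have stl: "stl \<in> measurable (P g) (stream_space M)"
    using measurable_stl[of M] by (simp add: measurable_cong_sets[OF sets_P[OF g] refl])
  then show "prob_space (distr (P g) (stream_space M) stl)"
    by (rule prob_space.prob_space_distr[OF prob_space_P[OF g]])
  show "prob_space (K g \<bind> P)"
    by (rule prob_space_bind'[OF K_in_space_prob_algebra[OF g] measurable_P])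
  show "sets (K g \<bind> P) = sets (stream_space M)"
    by (rule sets_bind'[OF K_in_space_prob_algebra[OF g] measurable_P])
  fix A As assume A: "A \<in> sets M" and As: "set As \<subseteq> sets M"
  let ?C = "scylinder (space M) (A # As)"
  have C: "?C \<in> sets (stream_space M)" using A As by (intro sets_scylinder) auto
  have "stl -` ?C \<inter> space (P g) = scylinder (space M) (space M # A # As)"
    by (auto simp: space_P[OF g] space_stream_space streams_shd streams_stl)
  then have "emeasure (distr (P g) (stream_space M) stl) ?C = cyl_prob K (A # As) g"
    using emeasure_distr[OF stl C] emeasure_P_scylinder[OF g sets.top, of "A # As"] A As g by simp
  also have "\<dots> = (\<integral>\<^sup>+h. emeasure (P h) ?C \<partial>K g)"
    using A As
    by (auto simp: space_K[OF g] emeasure_P_scylinder simp del: scylinder.simps intro!: nn_integral_cong)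
  also have "\<dots> = emeasure (K g \<bind> P) ?C"
    by (rule emeasure_bind_prob_algebra[OF K_in_space_prob_algebra[OF g] measurable_P C, symmetric])
  finally show "emeasure (distr (P g) (stream_space M) stl) ?C = emeasure (K g \<bind> P) ?C" .
qed simp

lemma emeasure_P_shift_invariant:
  assumes g: "g \<in> space M" and A: "A \<in> sets (stream_space M)"
    and invariant: "AE w in P g. stl w \<in> A \<longleftrightarrow> w \<in> A"
  shows "emeasure (P g) A = (\<integral>\<^sup>+h. emeasure (P h) A \<partial>K g)"
proof -
  have stl: "stl \<in> measurable (P g) (stream_space M)"
    using measurable_stl[of M] by (simp add: measurable_cong_sets[OF sets_P[OF g] refl])
  have "emeasure (P g) A = emeasure (P g) (stl -` A \<inter> space (P g))"
    using invariant A measurable_sets[OF stl A] sets_P[OF g] by (intro emeasure_eq_AE) auto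
  also have "\<dots> = emeasure (K g \<bind> P) A"
    using emeasure_distr[OF stl A] by (simp add: distr_stl_P[OF g])
  also have "\<dots> = (\<integral>\<^sup>+h. emeasure (P h) A \<partial>K g)"
    by (rule emeasure_bind_prob_algebra[OF K_in_space_prob_algebra[OF g] measurable_P A])
  finally show ?thesis .
qed

text \<open>\<open>cyl_prob K (replicate j (space M) @ [space M - F]) g\<close> is the probability that the
  chain from \<open>g\<close> is outside \<open>F\<close> at time \<open>j + 1\<close>.\<close>
lemma cyl_prob_exit_zero:
  assumes F: "F \<in> sets M" and closed: "\<And>h. h \<in> F \<Longrightarrow> AE h' in K h. h' \<in> F" and "g \<in> F"
  shows "cyl_prob K (replicate j (space M) @ [space M - F]) g = 0"
  using \<open>g \<in> F\<close>
proof (induction j arbitrary: g)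
  case 0
  have "(\<integral>\<^sup>+h. indicator (space M - F) h \<partial>K g) = (\<integral>\<^sup>+h. 0 \<partial>K g)"
    using closed[OF 0] by (intro nn_integral_cong_AE) (auto elim!: AE_mp)
  then show ?case by simp
next
  case (Suc j)
  have "(\<integral>\<^sup>+h. indicator (space M) h * cyl_prob K (replicate j (space M) @ [space M - F]) h \<partial>K g)
      = (\<integral>\<^sup>+h. 0 \<partial>K g)"
    using closed[OF Suc.prems] Suc.IH by (intro nn_integral_cong_AE) (auto elim!: AE_mp)
  then show ?case by simp
qed

lemma AE_P_stays_in:
  assumes F: "F \<in> sets M" and closed: "\<And>h. h \<in> F \<Longrightarrow> AE h' in K h. h' \<in> F" and g: "g \<in> F"
  shows "AE w in P g. \<forall>k. w !! k \<in> F"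
proof (subst AE_all_countable, rule allI)
  fix k
  have g_space: "g \<in> space M" using sets.sets_into_space[OF F] g by auto
  let ?N = "scylinder (space M) (replicate k (space M) @ [space M - F])"
  have N: "?N \<in> sets (stream_space M)" using F by (intro sets_scylinder) auto
  have "{w\<in>space (P g). w !! k \<notin> F} = ?N"
    by (auto simp: space_P[OF g_space] space_stream_space scylinder_replicate_snoc snth_in)
  moreover have "emeasure (P g) ?N = 0"
  proof (cases k)
    case 0
    then show ?thesis using emeasure_P_scylinder[OF g_space, of "space M - F" "[]"] F g by simp
  next
    case (Suc j)
    have "set (replicate j (space M) @ [space M - F]) \<subseteq> sets M"
      using F by (induction j) auto
    then show ?thesis
      using emeasure_P_scylinder[OF g_space sets.top, of "replicate j (space M) @ [space M - F]"]
        cyl_prob_exit_zero[OF F closed g, of j] Suc by (simp del: scylinder.simps)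
  qed
  ultimately show "AE w in P g. w !! k \<in> F"
    using N sets_P[OF g_space] by (simp add: AE_iff_measurable)
qed

end


section \<open>The reflected random walk on a Borel groupoid\<close>

locale reflected_random_walk =
  fixes G :: "'g measure" and X :: "'x measure" and s t :: "'g \<Rightarrow> 'x" and u :: "'x \<Rightarrow> 'g"
    and m :: "'g \<Rightarrow> 'g \<Rightarrow> 'g" and i :: "'g \<Rightarrow> 'g"
    and piCK :: "'x \<Rightarrow> 'g measure" and P :: "'g \<Rightarrow> 'g stream measure"
  assumes groupoid: "borel_groupoid G X s t u m i" and standard: "standard_borel X"
    and measurable_piCK: "piCK \<in> measurable X (subprob_algebra G)"
    and markov_P: "\<And>g. g \<in> space G \<Longrightarrow> markov_measure G (reflected_transition G s t m piCK) g (P g)"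
begin

abbreviation K :: "'g \<Rightarrow> 'g measure" where
  "K \<equiv> reflected_transition G s t m piCK"

definition lmult_vimage :: "'g \<Rightarrow> 'g set \<Rightarrow> 'g set" where
  "lmult_vimage g E = {h\<in>space G. t h = s g \<and> m g h \<in> E}"

lemma s_measurable: "s \<in> measurable G X" and t_measurable: "t \<in> measurable G X"
  and u_measurable: "u \<in> measurable X G" and i_measurable: "i \<in> measurable G G"
  and m_measurable: "(\<lambda>(g, h). m g h) \<in> measurable (restrict_space (G \<Otimes>\<^sub>M G) {(g, h). s g = t h}) G"
  and s_unit: "\<And>x. x \<in> space X \<Longrightarrow> s (u x) = x"
  and t_unit: "\<And>x. x \<in> space X \<Longrightarrow> t (u x) = x"
  and st_mult: "\<And>g h. g \<in> space G \<Longrightarrow> h \<in> space G \<Longrightarrow> s g = t h \<Longrightarrow> s (m g h) = s h \<and> t (m g h) = t g"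
  and mult_assoc: "\<And>g h k. g \<in> space G \<Longrightarrow> h \<in> space G \<Longrightarrow> k \<in> space G \<Longrightarrow> s g = t h \<Longrightarrow>
        s h = t k \<Longrightarrow> m (m g h) k = m g (m h k)"
  and mult_unit_left: "\<And>g. g \<in> space G \<Longrightarrow> m (u (t g)) g = g"
  and mult_unit_right: "\<And>g. g \<in> space G \<Longrightarrow> m g (u (s g)) = g"
  and st_inverse: "\<And>g. g \<in> space G \<Longrightarrow> s (i g) = t g \<and> t (i g) = s g"
  using groupoid unfolding borel_groupoid_def by blast+

lemma s_space: "g \<in> space G \<Longrightarrow> s g \<in> space X"
  using measurable_space[OF s_measurable] .

lemma t_space: "g \<in> space G \<Longrightarrow> t g \<in> space X"
  using measurable_space[OF t_measurable] .

lemma u_space: "x \<in> space X \<Longrightarrow> u x \<in> space G"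
  using measurable_space[OF u_measurable] .

lemma i_space: "g \<in> space G \<Longrightarrow> i g \<in> space G"
  using measurable_space[OF i_measurable] .

lemma mult_space:
  assumes "g \<in> space G" "h \<in> space G" "s g = t h"
  shows "m g h \<in> space G"
  using measurable_space[OF m_measurable, of "(g, h)"] assms
  by (simp add: space_restrict_space space_pair_measure)

lemma sets_piCK: "x \<in> space X \<Longrightarrow> sets (piCK x) = sets G"
  using subprob_measurableD(2)[OF measurable_piCK] .

lemma space_piCK: "x \<in> space X \<Longrightarrow> space (piCK x) = space G"
  using subprob_measurableD(1)[OF measurable_piCK] .

lemma t_fibre_sets: "y \<in> space X \<Longrightarrow> {h\<in>space G. t h = y} \<in> sets G"
  using measurable_sets[OF t_measurable standard_borel_singleton_sets[OF standard]]
  by (simp add: vimage_def Int_def conj_commute)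

lemma measurable_mult_left:
  assumes g: "g \<in> space G"
  shows "m g \<in> measurable (restrict_space G {h. t h = s g}) G"
proof -
  have "Pair g \<in> measurable (restrict_space G {h. t h = s g})
      (restrict_space (G \<Otimes>\<^sub>M G) {(g, h). s g = t h})"
    by (rule measurable_restrict_space3[OF measurable_Pair1'[OF g]]) auto
  from measurable_comp[OF this m_measurable] show ?thesis by (simp add: comp_def)
qed

lemma sets_mult_graph:
  assumes E: "E \<in> sets G"
  shows "{p\<in>space (G \<Otimes>\<^sub>M G). s (fst p) = t (snd p) \<and> m (fst p) (snd p) \<in> E} \<in> sets (G \<Otimes>\<^sub>M G)"
proof -
  let ?R = "restrict_space (G \<Otimes>\<^sub>M G) {(g, h). s g = t h}"
  have "{p\<in>space (G \<Otimes>\<^sub>M G). s (fst p) = t (snd p)} \<in> sets (G \<Otimes>\<^sub>M G)"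
    by (rule standard_borel_eq_sets[OF standard])
      (auto intro: measurable_compose[OF measurable_fst s_measurable]
        measurable_compose[OF measurable_snd t_measurable])
  then have "{(g, h). s g = t h} \<inter> space (G \<Otimes>\<^sub>M G) \<in> sets (G \<Otimes>\<^sub>M G)"
    by (simp add: Int_commute case_prod_beta Collect_conj_eq[symmetric] conj_commute)
  then have "(\<lambda>(g, h). m g h) -` E \<inter> space ?R \<in> sets (G \<Otimes>\<^sub>M G)"
    using measurable_sets[OF m_measurable E] by (simp add: sets_restrict_space_iff)
  moreover have "(\<lambda>(g, h). m g h) -` E \<inter> space ?R =
      {p\<in>space (G \<Otimes>\<^sub>M G). s (fst p) = t (snd p) \<and> m (fst p) (snd p) \<in> E}"
    by (auto simp: space_restrict_space)
  ultimately show ?thesis by simp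
qed

lemma sets_lmult_vimage:
  assumes g: "g \<in> space G" and E: "E \<in> sets G"
  shows "lmult_vimage g E \<in> sets G"
proof -
  have "Pair g -` {p\<in>space (G \<Otimes>\<^sub>M G). s (fst p) = t (snd p) \<and> m (fst p) (snd p) \<in> E} =
      lmult_vimage g E"
    using g by (auto simp: lmult_vimage_def space_pair_measure)
  with sets_Pair1[OF sets_mult_graph[OF E], of g] show ?thesis by simp
qed

lemma measurable_mult_left_piCK:
  assumes g: "g \<in> space G"
  shows "m g \<in> measurable (restrict_space (piCK (s g)) {h. t h = s g}) G"
  using measurable_mult_left[OF g]
  by (simp add: measurable_cong_sets[OF sets_restrict_space_cong[OF sets_piCK[OF s_space[OF g]]] refl])

lemma t_fibre_sets_piCK:
  assumes g: "g \<in> space G"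
  shows "{h. t h = s g} \<inter> space (piCK (s g)) \<in> sets (piCK (s g))"
  using t_fibre_sets[OF s_space[OF g]]
  by (simp add: space_piCK[OF s_space[OF g]] sets_piCK[OF s_space[OF g]] Int_commute Collect_conj_eq)

lemma emeasure_distr_mult_left:
  assumes g: "g \<in> space G" and E: "E \<in> sets G"
  shows "emeasure (distr (restrict_space (piCK (s g)) {h. t h = s g}) G (m g)) E =
    emeasure (piCK (s g)) (lmult_vimage g E)"
proof -
  let ?R = "restrict_space (piCK (s g)) {h. t h = s g}"
  have "emeasure (distr ?R G (m g)) E = emeasure ?R (m g -` E \<inter> space ?R)"
    by (rule emeasure_distr[OF measurable_mult_left_piCK[OF g] E])
  also have "\<dots> = emeasure (piCK (s g)) (m g -` E \<inter> space ?R)"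
    by (rule emeasure_restrict_space[OF t_fibre_sets_piCK[OF g]]) (auto simp: space_restrict_space)
  also have "m g -` E \<inter> space ?R = lmult_vimage g E"
    by (auto simp: space_restrict_space space_piCK[OF s_space[OF g]] lmult_vimage_def)
  finally show ?thesis .
qed

text \<open>
  \<^const>\<open>reflected_transition\<close> is given by \<^const>\<open>measure_of\<close>, which only takes the
  intended values on a countably additive set function; identifying it with a pushforward
  settles this.
\<close>
lemma reflected_transition_eq_distr:
  assumes g: "g \<in> space G"
  shows "K g = distr (restrict_space (piCK (s g)) {h. t h = s g}) G (m g)"
proof -
  let ?D = "distr (restrict_space (piCK (s g)) {h. t h = s g}) G (m g)"
  have "?D = measure_of (space G) (sets G) (emeasure ?D)"
    using measure_of_of_measure[of ?D] by simp
  also have "\<dots> = measure_of (space G) (sets G) (\<lambda>E. emeasure (piCK (s g)) (lmult_vimage g E))"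
    using emeasure_distr_mult_left[OF g]
    by (intro measure_of_eq[OF sets.space_closed]) (simp add: sets.sigma_sets_eq)
  finally show ?thesis unfolding reflected_transition_def lmult_vimage_def by simp
qed

lemma sets_reflected_transition: "sets (K g) = sets G"
  by (simp add: reflected_transition_def)

lemma emeasure_reflected_transition:
  "g \<in> space G \<Longrightarrow> E \<in> sets G \<Longrightarrow> emeasure (K g) E = emeasure (piCK (s g)) (lmult_vimage g E)"
  using emeasure_distr_mult_left reflected_transition_eq_distr by simp

lemma nn_integral_reflected_transition:
  assumes g: "g \<in> space G" and f: "f \<in> borel_measurable G"
  shows "(\<integral>\<^sup>+h. f h \<partial>K g) = (\<integral>\<^sup>+l. f (m g l) * indicator {l. t l = s g} l \<partial>piCK (s g))"
  using f measurable_mult_left_piCK[OF g] t_fibre_sets_piCK[OF g]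
  by (simp add: reflected_transition_eq_distr[OF g] nn_integral_distr nn_integral_restrict_space)

lemma measurable_emeasure_reflected_transition:
  assumes E: "E \<in> sets G"
  shows "(\<lambda>g. emeasure (K g) E) \<in> borel_measurable G"
proof -
  have "(SIGMA g:space G. lmult_vimage g E) =
      {p\<in>space (G \<Otimes>\<^sub>M G). s (fst p) = t (snd p) \<and> m (fst p) (snd p) \<in> E}"
    by (auto simp: lmult_vimage_def space_pair_measure)
  then have "(\<lambda>g. emeasure (piCK (s g)) (lmult_vimage g E)) \<in> borel_measurable G"
    using sets_mult_graph[OF E] measurable_compose[OF s_measurable measurable_piCK]
    by (intro emeasure_measurable_subprob_algebra2) auto
  then show ?thesis
    by (rule measurable_cong[THEN iffD1, rotated]) (simp add: emeasure_reflected_transition E)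
qed

sublocale markov_chain G K P
  using sets_reflected_transition measurable_emeasure_reflected_transition markov_P
  by unfold_locales

lemma AE_reflected_transition_fibre:
  assumes g: "g \<in> space G"
  shows "AE h in K g. h \<in> {h\<in>space G. t h = t g}"
proof (rule AE_I')
  let ?N = "space G - {h\<in>space G. t h = t g}"
  have "?N \<in> sets G" using t_fibre_sets[OF t_space[OF g]] by auto
  moreover have "lmult_vimage g ?N = {}"
    using g by (auto simp: lmult_vimage_def st_mult)
  ultimately show "?N \<in> null_sets (K g)"
    by (simp add: null_sets_def sets_reflected_transition emeasure_reflected_transition[OF g])
qed (auto simp: space_K[OF g])

lemma path_fibre_snth:
  assumes "w \<in> path_space G t" "t (shd w) = y"
  shows "w !! k \<in> space G \<and> t (w !! k) = y"
proof -
  have "w \<in> streams (space G)" and "t (w !! k) = t (w !! 0)"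
    using assms(1) unfolding path_space_def space_stream_space by blast+
  then show ?thesis using assms(2) by (simp add: snth_in)
qed

lemma path_space_subset: "path_space G t \<subseteq> space (stream_space G)"
  unfolding path_space_def by blast

lemma in_path_fibreI:
  assumes "w \<in> space (stream_space G)" "\<And>k. t (w !! k) = y"
  shows "w \<in> path_space G t \<and> t (shd w) = y"
  using assms assms(2)[of 0] by (simp add: path_space_def)

lemma sets_path_fibre:
  assumes y: "y \<in> space X"
  shows "{w\<in>path_space G t. t (shd w) = y} \<in> sets (stream_space G)"
proof -
  define F where "F = {h\<in>space G. t h = y}"
  have [measurable]: "F \<in> sets G" using t_fibre_sets[OF y] by (simp add: F_def)
  have "{w\<in>path_space G t. t (shd w) = y} = {w\<in>space (stream_space G). \<forall>k. w !! k \<in> F}"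
  proof (intro set_eqI iffI)
    fix w assume "w \<in> {w\<in>space (stream_space G). \<forall>k. w !! k \<in> F}"
    then show "w \<in> {w\<in>path_space G t. t (shd w) = y}" using in_path_fibreI[of w y] by (simp add: F_def)
  next
    fix w assume "w \<in> {w\<in>path_space G t. t (shd w) = y}"
    then show "w \<in> {w\<in>space (stream_space G). \<forall>k. w !! k \<in> F}"
      using path_fibre_snth[of w y] path_space_subset by (auto simp: F_def)
  qed
  also have "\<dots> \<in> sets (stream_space G)" by measurable
  finally show ?thesis .
qed

lemma AE_P_path_fibre:
  assumes g: "g \<in> space G"
  shows "AE w in P g. w \<in> path_space G t \<and> t (shd w) = t g"
proof -
  have "AE w in P g. \<forall>k. w !! k \<in> {h\<in>space G. t h = t g}"
  proof (rule AE_P_stays_in[OF t_fibre_sets[OF t_space[OF g]]])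
    fix h assume "h \<in> {h\<in>space G. t h = t g}"
    then show "AE h' in K h. h' \<in> {h\<in>space G. t h = t g}"
      using AE_reflected_transition_fibre[of h] by simp
  qed (use g in simp)
  then show ?thesis
    using AE_space
  proof eventually_elim
    case (elim w)
    then show ?case using in_path_fibreI[of w "t g"] by (simp add: space_P[OF g])
  qed
qed

lemma AE_stl_stable_invariant:
  assumes A: "stable_invariant G t A" and g: "g \<in> space G"
  shows "AE w in P g. stl w \<in> A \<longleftrightarrow> w \<in> A"
  using AE_P_path_fibre[OF g]
proof eventually_elim
  case (elim w)
  then have "stl w \<in> space (stream_space G)"
    using path_space_subset by (auto simp: space_stream_space streams_stl)
  then have "stl w \<in> path_space G t"
    using in_path_fibreI[of "stl w" "t g"] path_fibre_snth[of w "t g" "Suc _"] elim by simp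
  moreover have "stably_equiv w (stl w)"
    unfolding stably_equiv_def by (rule exI[of _ 1], rule exI[of _ 0]) simp
  ultimately show ?case using A elim unfolding stable_invariant_def by blast
qed

lemma reflected_transition_unit:
  assumes x: "x \<in> space X" and fibre: "AE h in piCK x. t h = x"
  shows "K (u x) = piCK x"
proof (rule measure_eqI)
  show "sets (K (u x)) = sets (piCK x)" by (simp add: sets_reflected_transition sets_piCK[OF x])
  fix E assume E: "E \<in> sets (K (u x))"
  then have E_G: "E \<in> sets G" by (simp add: sets_reflected_transition)
  have "emeasure (K (u x)) E = emeasure (piCK x) (lmult_vimage (u x) E)"
    using emeasure_reflected_transition[OF u_space[OF x] E_G] s_unit[OF x] by simp
  also have "\<dots> = emeasure (piCK x) E"
  proof (rule emeasure_eq_AE)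
    show "AE h in piCK x. h \<in> lmult_vimage (u x) E \<longleftrightarrow> h \<in> E"
      using fibre AE_space
      by eventually_elim (auto simp: lmult_vimage_def space_piCK[OF x] s_unit[OF x] mult_unit_left)
    show "lmult_vimage (u x) E \<in> sets (piCK x)" "E \<in> sets (piCK x)"
      using sets_lmult_vimage[OF u_space[OF x] E_G] E_G by (simp_all add: sets_piCK[OF x])
  qed
  finally show "emeasure (K (u x)) E = emeasure (piCK x) E" .
qed

lemma cyl_prob_mult_left:
  assumes g: "g \<in> space G"
  shows "k \<in> space G \<Longrightarrow> t k = s g \<Longrightarrow> set As \<subseteq> sets G \<Longrightarrow>
    cyl_prob K As (m g k) = cyl_prob K (map (lmult_vimage g) As) k"
proof (induction As arbitrary: k)
  case (Cons A As)
  have A: "A \<in> sets G" and As: "set As \<subseteq> sets G" using Cons.prems by auto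
  have As': "set (map (lmult_vimage g) As) \<subseteq> sets G" using As sets_lmult_vimage[OF g] by auto
  have gk: "m g k \<in> space G" and sgk: "s (m g k) = s k"
    using mult_space[OF g Cons.prems(1)] st_mult[OF g Cons.prems(1)] Cons.prems(2) by auto
  note [measurable] = A sets_lmult_vimage[OF g A] measurable_cyl_prob[OF As] measurable_cyl_prob[OF As']
  have "cyl_prob K (A # As) (m g k) = (\<integral>\<^sup>+l. indicator A (m (m g k) l) * cyl_prob K As (m (m g k) l) *
      indicator {l. t l = s k} l \<partial>piCK (s k))"
    using nn_integral_reflected_transition[OF gk] by (simp add: sgk)
  also have "\<dots> = (\<integral>\<^sup>+l. indicator (lmult_vimage g A) (m k l) * cyl_prob K (map (lmult_vimage g) As) (m k l) *
      indicator {l. t l = s k} l \<partial>piCK (s k))"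
  proof (intro nn_integral_cong)
    fix l assume "l \<in> space (piCK (s k))"
    then have l: "l \<in> space G" using space_piCK[OF s_space[OF Cons.prems(1)]] by simp
    show "indicator A (m (m g k) l) * cyl_prob K As (m (m g k) l) * indicator {l. t l = s k} l =
      indicator (lmult_vimage g A) (m k l) * cyl_prob K (map (lmult_vimage g) As) (m k l) *
      indicator {l. t l = s k} l"
    proof (cases "t l = s k")
      case True
      have kl: "m k l \<in> space G" and tkl: "t (m k l) = s g"
        using mult_space[OF Cons.prems(1) l] st_mult[OF Cons.prems(1) l] True Cons.prems(2) by auto
      have "m (m g k) l = m g (m k l)"
        using mult_assoc[OF g Cons.prems(1) l] Cons.prems(2) True by simp
      moreover have "indicator (lmult_vimage g A) (m k l) = (indicator A (m g (m k l)) :: ennreal)"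
        using kl tkl by (simp add: lmult_vimage_def indicator_def)
      ultimately show ?thesis using Cons.IH[OF kl tkl As] by simp
    qed simp
  qed
  also have "\<dots> = cyl_prob K (map (lmult_vimage g) (A # As)) k"
    using nn_integral_reflected_transition[OF Cons.prems(1)] by simp
  finally show ?case .
qed simp

lemma smap_mult_left_scylinder:
  assumes g: "g \<in> space G" and w: "w \<in> path_space G t" "t (shd w) = s g"
  shows "smap (m g) w \<in> scylinder (space G) As \<longleftrightarrow> w \<in> scylinder (space G) (map (lmult_vimage g) As)"
proof -
  have snth: "w !! k \<in> space G \<and> t (w !! k) = s g" for k using path_fibre_snth[OF w] .
  then have "w \<in> streams (space G)" "smap (m g) w \<in> streams (space G)"
    using g by (auto simp: streams_iff_snth intro: mult_space)
  then show ?thesis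
    using snth by (simp add: scylinder_iff_snth lmult_vimage_def)
qed

lemma measurable_smap_mult_left:
  assumes g: "g \<in> space G" and N: "sets N = sets (stream_space G)"
  shows "smap (m g) \<in> measurable (restrict_space N {w\<in>path_space G t. t (shd w) = s g}) (stream_space G)"
proof (rule measurable_stream_space2)
  fix n
  have "(\<lambda>w. w !! n) \<in> measurable (restrict_space N {w\<in>path_space G t. t (shd w) = s g})
      (restrict_space G {h. t h = s g})"
    using measurable_snth[of n G] path_fibre_snth
    by (intro measurable_restrict_space3)
      (auto simp: measurable_cong_sets[OF N refl] measurable_restrict_space1)
  from measurable_compose[OF this measurable_mult_left[OF g]]
  show "(\<lambda>w. smap (m g) w !! n) \<in> measurable (restrict_space N {w\<in>path_space G t. t (shd w) = s g}) G"
    by simp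
qed

lemma emeasure_P_unit_scylinder_mult_left:
  assumes g: "g \<in> space G" and A: "A \<in> sets G" and As: "set As \<subseteq> sets G"
  shows "emeasure (P (u (s g))) (scylinder (space G) (map (lmult_vimage g) (A # As))) =
    emeasure (P g) (scylinder (space G) (A # As))"
proof -
  have e: "u (s g) \<in> space G" and te: "t (u (s g)) = s g" and ge: "m g (u (s g)) = g"
    using u_space[OF s_space[OF g]] t_unit[OF s_space[OF g]] mult_unit_right[OF g] by auto
  have "emeasure (P (u (s g))) (scylinder (space G) (map (lmult_vimage g) (A # As))) =
      indicator (lmult_vimage g A) (u (s g)) * cyl_prob K (map (lmult_vimage g) As) (u (s g))"
    using emeasure_P_scylinder[OF e sets_lmult_vimage[OF g A], of "map (lmult_vimage g) As"]
      As sets_lmult_vimage[OF g] by (auto simp del: scylinder.simps)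
  also have "\<dots> = indicator A g * cyl_prob K As g"
    using cyl_prob_mult_left[OF g e te As] e te ge by (simp add: lmult_vimage_def indicator_def)
  also have "\<dots> = emeasure (P g) (scylinder (space G) (A # As))"
    using emeasure_P_scylinder[OF g A As] by simp
  finally show ?thesis .
qed

lemma P_eq_translate:
  assumes g: "g \<in> space G"
  shows "P g = distr (restrict_space (P (u (s g))) {w\<in>path_space G t. t (shd w) = s g})
    (stream_space G) (smap (m g))"
proof -
  define e where "e = u (s g)"
  define F where "F = {w\<in>path_space G t. t (shd w) = s g}"
  let ?R = "restrict_space (P e) F"
  have e: "e \<in> space G" and te: "t e = s g"
    using u_space[OF s_space[OF g]] t_unit[OF s_space[OF g]] by (auto simp: e_def)
  have F: "F \<in> sets (P e)"
    using sets_path_fibre[OF s_space[OF g]] sets_P[OF e] by (simp add: F_def)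
  then have F_space: "F \<inter> space (P e) = F" using sets.sets_into_space by blast
  have AE_F: "AE w in P e. w \<in> F"
    using AE_P_path_fibre[OF e] by (simp add: F_def te)
  have smap: "smap (m g) \<in> measurable ?R (stream_space G)"
    using measurable_smap_mult_left[OF g sets_P[OF e]] by (simp add: F_def)
  have "P g = distr ?R (stream_space G) (smap (m g))"
  proof (rule stream_measure_eqI_scylinder)
    show "prob_space (P g)" "sets (P g) = sets (stream_space G)"
      using prob_space_P[OF g] sets_P[OF g] .
    show "prob_space (distr ?R (stream_space G) (smap (m g)))"
      using prob_space_restrict_space[OF F prob_space.emeasure_eq_1_AE[OF prob_space_P[OF e] F AE_F]]
      by (rule prob_space.prob_space_distr[OF _ smap])
    fix A As assume A: "A \<in> sets G" and As: "set As \<subseteq> sets G"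
    let ?C = "scylinder (space G) (A # As)"
    let ?C' = "scylinder (space G) (map (lmult_vimage g) (A # As))"
    have C: "?C \<in> sets (stream_space G)"
      using A As by (intro sets_scylinder) auto
    have C': "?C' \<in> sets (stream_space G)"
      using A As sets_lmult_vimage[OF g] by (intro sets_scylinder) auto
    have "emeasure (distr ?R (stream_space G) (smap (m g))) ?C = emeasure (P e) (smap (m g) -` ?C \<inter> F)"
      using emeasure_distr[OF smap C] emeasure_restrict_space[of F "P e"] F F_space
      by (simp add: space_restrict_space F_space)
    also have "smap (m g) -` ?C \<inter> F = ?C' \<inter> F"
      using smap_mult_left_scylinder[OF g] by (auto simp: F_def simp del: scylinder.simps)
    also have "emeasure (P e) (?C' \<inter> F) = emeasure (P e) ?C'"
      using AE_F C' F sets_P[OF e] by (intro emeasure_eq_AE) auto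
    also have "\<dots> = emeasure (P g) ?C"
      using emeasure_P_unit_scylinder_mult_left[OF g A As] by (simp add: e_def)
    finally show "emeasure (P g) ?C = emeasure (distr ?R (stream_space G) (smap (m g))) ?C" by simp
  qed simp
  then show ?thesis by (simp add: e_def F_def)
qed

lemma emeasure_P_translate:
  assumes g: "g \<in> space G" and B: "B \<in> sets (stream_space G)"
  shows "emeasure (P g) B =
    emeasure (P (u (s g))) {w\<in>path_space G t. t (shd w) = s g \<and> smap (m g) w \<in> B}"
proof -
  let ?F = "{w\<in>path_space G t. t (shd w) = s g}"
  have e: "u (s g) \<in> space G" using u_space[OF s_space[OF g]] .
  have F: "?F \<in> sets (P (u (s g)))"
    using sets_path_fibre[OF s_space[OF g]] sets_P[OF e] by simp
  then have F_space: "?F \<inter> space (P (u (s g))) = ?F" using sets.sets_into_space by blast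
  have "emeasure (P g) B = emeasure (P (u (s g))) (smap (m g) -` B \<inter> ?F)"
    using emeasure_distr[OF measurable_smap_mult_left[OF g sets_P[OF e]] B]
      emeasure_restrict_space[of ?F "P (u (s g))"] F F_space
    by (simp add: P_eq_translate[OF g, symmetric] space_restrict_space F_space)
  also have "smap (m g) -` B \<inter> ?F = {w\<in>path_space G t. t (shd w) = s g \<and> smap (m g) w \<in> B}"
    by auto
  finally show ?thesis .
qed

lemma emeasure_P_unit_stable_invariant:
  assumes A: "stable_invariant G t A" and x: "x \<in> space X" and fibre: "AE h in piCK x. t h = x"
  shows "emeasure (P (u x)) A = (\<integral>\<^sup>+h. emeasure (P h) A \<partial>piCK x)"
proof -
  have "A \<in> sets (stream_space G)" using A by (simp add: stable_invariant_def)
  from emeasure_P_shift_invariant[OF u_space[OF x] this AE_stl_stable_invariant[OF A u_space[OF x]]]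
  show ?thesis by (simp add: reflected_transition_unit[OF x fibre])
qed

lemma nn_integral_emeasure_P_inverse:
  assumes B: "B \<in> sets (stream_space G)" and Q: "sets Q = sets G" and fibre: "AE g in Q. t g = x"
  shows "(\<integral>\<^sup>+g. emeasure (P (i g)) B \<partial>Q) =
    (\<integral>\<^sup>+g. emeasure (P (u x)) {w\<in>path_space G t. t (shd w) = t g \<and> smap (m (i g)) w \<in> B} \<partial>Q)"
proof (rule nn_integral_cong_AE)
  show "AE g in Q. emeasure (P (i g)) B =
      emeasure (P (u x)) {w\<in>path_space G t. t (shd w) = t g \<and> smap (m (i g)) w \<in> B}"
    using fibre AE_space
  proof eventually_elim
    case (elim g)
    then have g: "g \<in> space G" and "t g = x" using sets_eq_imp_space_eq[OF Q] by simp_all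
    then show ?case using emeasure_P_translate[OF i_space[OF g] B] st_inverse[OF g] by simp
  qed
qed

end

theorem proposition4p4:
  fixes G :: "'g measure" and X :: "'x measure"
    and s t :: "'g \<Rightarrow> 'x" and u :: "'x \<Rightarrow> 'g"
    and m :: "'g \<Rightarrow> 'g \<Rightarrow> 'g" and i :: "'g \<Rightarrow> 'g"
    and lam :: "'x \<Rightarrow> 'g measure" and mu :: "'x measure"
    and pi :: "'g measure" and piK piCK :: "'x \<Rightarrow> 'g measure"
    and P :: "'g \<Rightarrow> 'g stream measure"
  assumes "measured_groupoid G X s t u m i lam mu"
    and "prob_space pi" and "sets pi = sets G"
    and "equiv_measures pi (integrate_family G mu lam)"
    and "distr pi X t = mu" and "distr pi X s = mu"
    and "disintegration pi mu X t piK"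
    and "disintegration (distr pi G i) mu X t piCK"
    and "\<forall>g\<in>space G. markov_measure G (reflected_transition G s t m piCK) g (P g)"
  shows "\<forall>A. stable_invariant G t A \<longrightarrow>
           (\<integral>\<^sup>+ x. emeasure (P (u x)) A \<partial>mu) =
           (\<integral>\<^sup>+ x. (\<integral>\<^sup>+ g. emeasure (P (u x))
               {w\<in>path_space G t. t (shd w) = t g \<and> smap (m (i g)) w \<in> A} \<partial>(piK x)) \<partial>mu)"
proof (intro allI impI)
  fix A assume A: "stable_invariant G t A"
  have standard: "standard_borel X" and mu: "prob_space mu" and sets_mu: "sets mu = sets X"
    using assms(1) unfolding measured_groupoid_def by auto
  have "piCK \<in> measurable X (subprob_algebra G)"
    using disintegration_measurable[OF assms(8)] by (simp cong: subprob_algebra_cong)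
  then interpret reflected_random_walk G X s t u m i piCK P
    using assms(1,9) unfolding measured_groupoid_def by unfold_locales auto
  have A_sets: "A \<in> sets (stream_space G)" using A by (simp add: stable_invariant_def)
  have i_pi: "i \<in> measurable pi G" and t_pi: "t \<in> measurable pi X"
    using i_measurable t_measurable by (simp_all add: measurable_cong_sets[OF assms(3) refl])
  have t_distr: "t \<in> measurable (distr pi G i) X"
    using t_measurable by (simp add: measurable_cong_sets[OF sets_distr refl])
  have space_mu: "space mu = space X" using sets_mu by (rule sets_eq_imp_space_eq)
  have sets_piK: "sets (piK x) = sets G" if "x \<in> space mu" for x
    using assms(3,7) that space_mu unfolding disintegration_def by simp
  have "(\<integral>\<^sup>+x. emeasure (P (u x)) A \<partial>mu) = (\<integral>\<^sup>+x. (\<integral>\<^sup>+h. emeasure (P h) A \<partial>piCK x) \<partial>mu)"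
    using AE_disintegration_fibre[OF assms(8) standard t_distr sets_mu] AE_space
    by (intro nn_integral_cong_AE, eventually_elim)
      (simp add: emeasure_P_unit_stable_invariant[OF A] space_mu)
  also have "\<dots> = (\<integral>\<^sup>+h. emeasure (P h) A \<partial>distr pi G i)"
    using measurable_emeasure_P[OF A_sets]
    by (intro nn_integral_disintegration[OF assms(8) sets_mu mu, symmetric]) simp
  also have "\<dots> = (\<integral>\<^sup>+g. emeasure (P (i g)) A \<partial>pi)"
    using measurable_emeasure_P[OF A_sets] by (intro nn_integral_distr[OF i_pi]) simp
  also have "\<dots> = (\<integral>\<^sup>+x. (\<integral>\<^sup>+g. emeasure (P (i g)) A \<partial>piK x) \<partial>mu)"
    by (intro nn_integral_disintegration[OF assms(7) sets_mu mu]
        measurable_compose[OF i_pi measurable_emeasure_P[OF A_sets]])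
  also have "\<dots> = (\<integral>\<^sup>+ x. (\<integral>\<^sup>+ g. emeasure (P (u x))
               {w\<in>path_space G t. t (shd w) = t g \<and> smap (m (i g)) w \<in> A} \<partial>(piK x)) \<partial>mu)"
    using AE_disintegration_fibre[OF assms(7) standard t_pi sets_mu] AE_space
    by (intro nn_integral_cong_AE, eventually_elim)
      (simp add: nn_integral_emeasure_P_inverse[OF A_sets sets_piK])
  finally show "(\<integral>\<^sup>+ x. emeasure (P (u x)) A \<partial>mu) = (\<integral>\<^sup>+ x. (\<integral>\<^sup>+ g. emeasure (P (u x))
               {w\<in>path_space G t. t (shd w) = t g \<and> smap (m (i g)) w \<in> A} \<partial>(piK x)) \<partial>mu)" .
qed
end
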